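(* Assume the standing setting and the type II decomposition for a type II edge $e=uw$ ($u\in U$, $w\in W$). Then: (i) if $U_2\neq\emptyset$ then $u\in U_2$; otherwise $u\in U_4$ and $|W_2|=1$; (ii) if $W_1\neq\emptyset$ then $w\in W_1$; otherwise $w\in W_3$; (iii) if $U_4\neq\emptyset$ then $E_G(U_4)=\{e_1\}$; otherwise $E_G[U_1,U_2]=\{e_1\}$; (iv) if $W_3\neq\emptyset$ then $|U_1|=|W_1|+1$ and $E_G(W_3)=\{e_2\}$; otherwise $|U_1|=|W_1|$, $E_G[W_1,W_2]=\{e_2\}$ and $U_3=\emptyset$; (v) $|U_2\cup U_4|=|W_2\cup W_4|$.
   Context: Graphs may have multiple edges but no loops. An edge is admissible if it lies in some perfect matching; a connected graph with at least two vertices is matching covered if every edge is admissible; an edge $e$ of a matching covered graph $G$ is removable if $G-e$ is matching covered, and nonremovable otherwise. A brick is a 3-connected nonbipartite graph $G$ such that $G-x-y$ has a perfect matching for all distinct $x,y$. A nonbipartite matching covered graph $G$ is near-bipartite if it has a pair of edges $\{e_1,e_2\}$ (a removable doubleton) such that $G-\{e_1,e_2\}$ is bipartite matching covered. For a graph with a perfect matching, a nonempty vertex set $S$ is a barrier if the number of odd components of $G-S$ equals $|S|$. $E_G(X)$ is the set of edges with both ends in $X$ and $E_G[X,Y]$ the set of edges with one end in $X$ and the other in $Y$. Standing setting: $G$ is a near-bipartite brick with removable doubleton $\{e_1,e_2\}$, $H=G-\{e_1,e_2\}$, and $(U,W)$ is the bipartition of $H$, labelled so that both ends of $e_1$ lie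 in $U$ and both ends of $e_2$ lie in $W$. A nonremovable edge $e\notin\{e_1,e_2\}$ of $G$ is of type II if $e$ is nonremovable in $H$. Type II decomposition: let $e=uw$ be of type II with $u\in U$, $w\in W$. There is an edge $e^*$ of $G-e$ that is nonadmissible both in $G-e$ and in $H-e$; fix such $e^*$ and an inclusion-maximal barrier $B$ of $G-e$ containing both ends of $e^*$. Every component of $G-e-B$ with more than one vertex contains $e_1$ or $e_2$, so there are at most two such components; let $\omega\in\{0,1,2\}$ be their number. Let $U_1=B\cap U$, $W_2=B\cap W$, and let $U_2$ (resp. $W_1$) be the set of vertices of $U$ (resp. $W$) forming single-vertex components of $G-e-B$. Define subgraphs $G_1,G_2$: if $\omega=2$, $G_1$ is the nontrivial component containing $e_2$ and $G_2$ the one containing $e_1$; if $\omega=1$, the unique nontrivial component is $G_2$ (and $G_1$ is empty) when $|U_1|=|W_1|$, and is $G_1$ (and $G_2$ is empty) otherwise; if $\omega=0$ both are empty. Set $U_3=V(G_1)\cap U$, $W_3=V(G_1)\cap W$, $U_4=V(G_2)\cap U$, $W_4=V(G_2)\cap W$. *)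

theory Defs
  imports Main
begin

text \<open>Finite multigraphs without loops: a vertex set V, an edge set E (edges are
abstract objects, so parallel edges are allowed) and an incidence map ends assigning to
each edge its set of two distinct ends.\<close>

definition graph :: "'v set \<Rightarrow> 'e set \<Rightarrow> ('e \<Rightarrow> 'v set) \<Rightarrow> bool" where
  "graph V E ends \<longleftrightarrow> finite V \<and> finite E \<and> (\<forall>f\<in>E. ends f \<subseteq> V \<and> card (ends f) = 2)"

definition adj_rel :: "'v set \<Rightarrow> 'e set \<Rightarrow> ('e \<Rightarrow> 'v set) \<Rightarrow> ('v \<times> 'v) set" where
  "adj_rel V E ends = {(x, y). x \<in> V \<and> y \<in> V \<and> (\<exists>f\<in>E. ends f = {x, y})}"

definition connected_graph :: "'v set \<Rightarrow> 'e set \<Rightarrow> ('e \<Rightarrow> 'v set) \<Rightarrow> bool" where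
  "connected_graph V E ends \<longleftrightarrow> V \<noteq> {} \<and> (\<forall>x\<in>V. \<forall>y\<in>V. (x, y) \<in> (adj_rel V E ends)\<^sup>*)"

definition components :: "'v set \<Rightarrow> 'e set \<Rightarrow> ('e \<Rightarrow> 'v set) \<Rightarrow> 'v set set" where
  "components V E ends = (\<lambda>x. {y \<in> V. (x, y) \<in> (adj_rel V E ends)\<^sup>*}) ` V"

definition edges_avoiding :: "'e set \<Rightarrow> ('e \<Rightarrow> 'v set) \<Rightarrow> 'v set \<Rightarrow> 'e set" where
  "edges_avoiding E ends S = {f \<in> E. ends f \<inter> S = {}}"

definition perfect_matching :: "'v set \<Rightarrow> 'e set \<Rightarrow> ('e \<Rightarrow> 'v set) \<Rightarrow> 'e set \<Rightarrow> bool" where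
  "perfect_matching V E ends M \<longleftrightarrow> M \<subseteq> E \<and> (\<forall>v\<in>V. \<exists>!f. f \<in> M \<and> v \<in> ends f)"

definition has_pm :: "'v set \<Rightarrow> 'e set \<Rightarrow> ('e \<Rightarrow> 'v set) \<Rightarrow> bool" where
  "has_pm V E ends \<longleftrightarrow> (\<exists>M. perfect_matching V E ends M)"

definition admissible :: "'v set \<Rightarrow> 'e set \<Rightarrow> ('e \<Rightarrow> 'v set) \<Rightarrow> 'e \<Rightarrow> bool" where
  "admissible V E ends f \<longleftrightarrow> (\<exists>M. perfect_matching V E ends M \<and> f \<in> M)"

definition matching_covered :: "'v set \<Rightarrow> 'e set \<Rightarrow> ('e \<Rightarrow> 'v set) \<Rightarrow> bool" where
  "matching_covered V E ends \<longleftrightarrow> graph V E ends \<and> connected_graph V E ends \<and> card V \<ge> 2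
     \<and> (\<forall>f\<in>E. admissible V E ends f)"

definition removable :: "'v set \<Rightarrow> 'e set \<Rightarrow> ('e \<Rightarrow> 'v set) \<Rightarrow> 'e \<Rightarrow> bool" where
  "removable V E ends f \<longleftrightarrow> f \<in> E \<and> matching_covered V (E - {f}) ends"

definition bipartite :: "'v set \<Rightarrow> 'e set \<Rightarrow> ('e \<Rightarrow> 'v set) \<Rightarrow> bool" where
  "bipartite V E ends \<longleftrightarrow> (\<exists>A B. A \<union> B = V \<and> A \<inter> B = {} \<and>
      (\<forall>f\<in>E. \<exists>a\<in>A. \<exists>b\<in>B. ends f = {a, b}))"

definition three_connected :: "'v set \<Rightarrow> 'e set \<Rightarrow> ('e \<Rightarrow> 'v set) \<Rightarrow> bool" where
  "three_connected V E ends \<longleftrightarrow> card V \<ge> 4 \<and>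
     (\<forall>S. S \<subseteq> V \<and> card S < 3 \<longrightarrow> connected_graph (V - S) (edges_avoiding E ends S) ends)"

definition brick :: "'v set \<Rightarrow> 'e set \<Rightarrow> ('e \<Rightarrow> 'v set) \<Rightarrow> bool" where
  "brick V E ends \<longleftrightarrow> graph V E ends \<and> three_connected V E ends \<and> \<not> bipartite V E ends \<and>
     (\<forall>x\<in>V. \<forall>y\<in>V. x \<noteq> y \<longrightarrow> has_pm (V - {x, y}) (edges_avoiding E ends {x, y}) ends)"

definition removable_doubleton :: "'v set \<Rightarrow> 'e set \<Rightarrow> ('e \<Rightarrow> 'v set) \<Rightarrow> 'e \<Rightarrow> 'e \<Rightarrow> bool" where
  "removable_doubleton V E ends e1 e2 \<longleftrightarrow> e1 \<in> E \<and> e2 \<in> E \<and> e1 \<noteq> e2 \<and>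
     matching_covered V E ends \<and> \<not> bipartite V E ends \<and>
     bipartite V (E - {e1, e2}) ends \<and> matching_covered V (E - {e1, e2}) ends"

definition barrier :: "'v set \<Rightarrow> 'e set \<Rightarrow> ('e \<Rightarrow> 'v set) \<Rightarrow> 'v set \<Rightarrow> bool" where
  "barrier V E ends S \<longleftrightarrow> has_pm V E ends \<and> S \<noteq> {} \<and> S \<subseteq> V \<and>
     card {C \<in> components (V - S) (edges_avoiding E ends S) ends. odd (card C)} = card S"

definition edges_in :: "'e set \<Rightarrow> ('e \<Rightarrow> 'v set) \<Rightarrow> 'v set \<Rightarrow> 'e set" where
  "edges_in E ends X = {f \<in> E. ends f \<subseteq> X}"

definition edges_between :: "'e set \<Rightarrow> ('e \<Rightarrow> 'v set) \<Rightarrow> 'v set \<Rightarrow> 'v set \<Rightarrow> 'e set" where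
  "edges_between E ends X Y = {f \<in> E. \<exists>x\<in>X. \<exists>y\<in>Y. ends f = {x, y}}"

definition td_comps :: "'v set \<Rightarrow> 'e set \<Rightarrow> ('e \<Rightarrow> 'v set) \<Rightarrow> 'e \<Rightarrow> 'v set \<Rightarrow> 'v set set" where
  "td_comps V E ends e B = components (V - B) (edges_avoiding (E - {e}) ends B) ends"

definition td_NT :: "'v set \<Rightarrow> 'e set \<Rightarrow> ('e \<Rightarrow> 'v set) \<Rightarrow> 'e \<Rightarrow> 'v set \<Rightarrow> 'v set set" where
  "td_NT V E ends e B = {C \<in> td_comps V E ends e B. card C \<ge> 2}"

definition td_singles :: "'v set \<Rightarrow> 'e set \<Rightarrow> ('e \<Rightarrow> 'v set) \<Rightarrow> 'e \<Rightarrow> 'v set \<Rightarrow> 'v set \<Rightarrow> 'v set" where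
  "td_singles V E ends e B X = {v \<in> X. {v} \<in> td_comps V E ends e B}"

definition td_VG1 :: "'v set \<Rightarrow> 'e set \<Rightarrow> ('e \<Rightarrow> 'v set) \<Rightarrow> 'e \<Rightarrow> 'e \<Rightarrow> 'e \<Rightarrow> 'v set \<Rightarrow> 'v set \<Rightarrow> 'v set \<Rightarrow> 'v set" where
  "td_VG1 V E ends e e1 e2 U W B =
    (let NT = td_NT V E ends e B in
     if card NT = 2 then (THE C. C \<in> NT \<and> ends e2 \<subseteq> C)
     else if card NT = 1 then
       (if card (B \<inter> U) = card (td_singles V E ends e B W) then {} else (THE C. C \<in> NT))
     else {})"

definition td_VG2 :: "'v set \<Rightarrow> 'e set \<Rightarrow> ('e \<Rightarrow> 'v set) \<Rightarrow> 'e \<Rightarrow> 'e \<Rightarrow> 'e \<Rightarrow> 'v set \<Rightarrow> 'v set \<Rightarrow> 'v set \<Rightarrow> 'v set" where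
  "td_VG2 V E ends e e1 e2 U W B =
    (let NT = td_NT V E ends e B in
     if card NT = 2 then (THE C. C \<in> NT \<and> ends e1 \<subseteq> C)
     else if card NT = 1 then
       (if card (B \<inter> U) = card (td_singles V E ends e B W) then (THE C. C \<in> NT) else {})
     else {})"

end

theory Submission
  imports Defs
begin

text \<open>Fix a perfect matching \<open>M0\<close> of \<open>H - e\<close>; it is also one of \<open>G - e\<close>, so every odd component
  of \<open>G - e - B\<close> sends exactly one \<open>M0\<close>-edge to the barrier \<open>B\<close> and every even one none.  As
  \<open>M0\<close> pairs \<open>U\<close> with \<open>W\<close>, every component is balanced or has one more vertex on the side of its
  exit, and the components with one more vertex in \<open>U\<close> correspond to \<open>B \<inter> W\<close>.  By maximality of
  \<open>B\<close>, a nontrivial component that is balanced or \<open>U\<close>-heavy contains \<open>e1\<close> (otherwise its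
  \<open>W\<close>-part could be added to \<open>B\<close>), and symmetrically for \<open>e2\<close>.  A matching of \<open>H\<close> through
  \<open>e*\<close> shows that \<open>u\<close> lies in a \<open>U\<close>-heavy component, and the brick property (every nonempty
  set \<open>Z\<close> has at least \<open>|Z| + 2\<close> neighbours when its neighbourhood avoids it) rules out the
  remaining configurations.\<close>

section \<open>Connected components\<close>

definition component_of :: "'v set \<Rightarrow> 'e set \<Rightarrow> ('e \<Rightarrow> 'v set) \<Rightarrow> 'v \<Rightarrow> 'v set" where
  "component_of V E ends x = {y \<in> V. (x, y) \<in> (adj_rel V E ends)\<^sup>*}"

lemma components_eq_component_of_image: "components V E ends = component_of V E ends ` V"
  unfolding components_def component_of_def by simp

lemma adj_rel_sym: "(x, y) \<in> adj_rel V E ends \<Longrightarrow> (y, x) \<in> adj_rel V E ends"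
  unfolding adj_rel_def by (auto simp: insert_commute)

lemma adj_rel_in_V: "(x, y) \<in> adj_rel V E ends \<Longrightarrow> x \<in> V \<and> y \<in> V"
  unfolding adj_rel_def by auto

lemma adj_rel_rtrancl_sym:
  "(x, y) \<in> (adj_rel V E ends)\<^sup>* \<Longrightarrow> (y, x) \<in> (adj_rel V E ends)\<^sup>*"
proof (induction rule: rtrancl_induct)
  case (step y z)
  show ?case by (rule converse_rtrancl_into_rtrancl[OF adj_rel_sym[OF step.hyps(2)] step.IH])
qed simp

lemma component_subset: "C \<in> components V E ends \<Longrightarrow> C \<subseteq> V"
  unfolding components_def by auto

lemma in_component_of: "x \<in> V \<Longrightarrow> x \<in> component_of V E ends x"
  unfolding component_of_def by auto

lemma component_of_in_components: "x \<in> V \<Longrightarrow> component_of V E ends x \<in> components V E ends"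
  unfolding components_eq_component_of_image by (rule imageI)

lemma component_eq_component_of:
  assumes "C \<in> components V E ends" "x \<in> C"
  shows "C = component_of V E ends x"
proof -
  obtain a where a: "C = component_of V E ends a"
    using assms(1) by (auto simp: components_eq_component_of_image)
  then have "(a, x) \<in> (adj_rel V E ends)\<^sup>*"
    using assms(2) by (auto simp: component_of_def)
  with adj_rel_rtrancl_sym[OF this] show ?thesis
    unfolding a component_of_def by (blast intro: rtrancl_trans)
qed

lemma components_disjoint:
  "C1 \<in> components V E ends \<Longrightarrow> C2 \<in> components V E ends \<Longrightarrow> x \<in> C1 \<Longrightarrow> x \<in> C2 \<Longrightarrow> C1 = C2"
  by (metis component_eq_component_of)

lemma component_edge_closed:
  assumes "C \<in> components V E ends" "x \<in> C" "f \<in> E" "ends f = {x, y}" "y \<in> V"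
  shows "y \<in> C"
proof -
  have "x \<in> V" using component_subset assms(1,2) by blast
  then have "(x, y) \<in> adj_rel V E ends" using assms(3-5) unfolding adj_rel_def by auto
  then show ?thesis
    using component_eq_component_of[OF assms(1,2)] assms(5) unfolding component_of_def by auto
qed

lemma finite_components: "finite V \<Longrightarrow> finite (components V E ends)"
  unfolding components_def by simp

lemma finite_component: "finite V \<Longrightarrow> C \<in> components V E ends \<Longrightarrow> finite C"
  by (rule finite_subset[OF component_subset])

lemma component_nonempty: "C \<in> components V E ends \<Longrightarrow> C \<noteq> {}"
  unfolding components_eq_component_of_image by (auto dest: in_component_of)

lemma isolated_vertex_component:
  assumes "x \<in> V" and isolated: "\<forall>f\<in>E. \<forall>y. ends f = {x, y} \<longrightarrow> y \<notin> V"
  shows "{x} \<in> components V E ends"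
proof -
  have "(x, y) \<in> (adj_rel V E ends)\<^sup>* \<Longrightarrow> y = x" for y
  proof (erule converse_rtranclE)
    fix z assume "(x, z) \<in> adj_rel V E ends"
    then show "y = x" using isolated unfolding adj_rel_def by blast
  qed simp
  then have "component_of V E ends x = {x}"
    using in_component_of[OF assms(1)] unfolding component_of_def by auto
  then show ?thesis using component_of_in_components[OF assms(1)] by metis
qed

lemma component_of_larger_deletion:
  assumes SS: "S \<subseteq> S'" and L: "L \<in> components (V - S) (edges_avoiding E ends S) ends"
    and LS: "L \<inter> S' = {}"
  shows "L \<in> components (V - S') (edges_avoiding E ends S') ends"
proof -
  define R where "R = adj_rel (V - S) (edges_avoiding E ends S) ends"
  define R' where "R' = adj_rel (V - S') (edges_avoiding E ends S') ends"
  obtain x where x: "x \<in> L" using component_nonempty[OF L] by blast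
  have Lx: "L = component_of (V - S) (edges_avoiding E ends S) ends x"
    using component_eq_component_of[OF L x] .
  have LV: "L \<subseteq> V - S" using component_subset[OF L] .
  have "R' \<subseteq> R"
    using SS unfolding R_def R'_def adj_rel_def edges_avoiding_def by blast
  then have "(x, y) \<in> R'\<^sup>* \<Longrightarrow> (x, y) \<in> R\<^sup>*" for y
    using rtrancl_mono by blast
  moreover have "(x, y) \<in> R'\<^sup>*" if "(x, y) \<in> R\<^sup>*" for y
    using that
  proof (induction rule: rtrancl_induct)
    case (step y z)
    then have "y \<in> L" "z \<in> L"
      using Lx adj_rel_in_V[of y z] rtrancl_into_rtrancl[of x y R z]
      unfolding R_def component_of_def by auto
    with step.hyps(2) have "(y, z) \<in> R'"
      using LV LS unfolding R_def R'_def adj_rel_def edges_avoiding_def by fastforce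
    with step.IH show ?case by (rule rtrancl_into_rtrancl)
  qed simp
  ultimately have "{y \<in> V - S'. (x, y) \<in> R'\<^sup>*} = L"
    using Lx LV LS SS unfolding component_of_def R_def by auto
  then have "component_of (V - S') (edges_avoiding E ends S') ends x = L"
    unfolding component_of_def R'_def .
  moreover have "x \<in> V - S'" using x LV LS by blast
  ultimately show ?thesis using component_of_in_components by metis
qed

section \<open>Perfect matchings\<close>

lemma graph_edge: "graph V E ends \<Longrightarrow> f \<in> E \<Longrightarrow> ends f \<subseteq> V \<and> card (ends f) = 2"
  unfolding graph_def by blast

lemma graph_subset: "graph V E ends \<Longrightarrow> E' \<subseteq> E \<Longrightarrow> graph V E' ends"
  unfolding graph_def using finite_subset by blast

lemma graph_delete_vertices:
  "graph V E ends \<Longrightarrow> graph (V - S) (edges_avoiding E ends S) ends"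
  unfolding graph_def edges_avoiding_def by auto

lemma edge_other_end:
  assumes "card (ends f) = 2" "x \<in> ends f"
  obtains y where "y \<noteq> x" "ends f = {x, y}"
proof -
  obtain a b where ab: "a \<noteq> b" "ends f = {a, b}" using assms(1) by (auto simp: card_2_iff)
  show thesis
  proof (cases "x = a")
    case False
    then have "x = b" using ab assms(2) by blast
    then show thesis using that[of a] ab by (simp add: insert_commute)
  qed (use that[of b] ab in simp)
qed

lemma perfect_matching_mono:
  "perfect_matching V E ends M \<Longrightarrow> E \<subseteq> E' \<Longrightarrow> perfect_matching V E' ends M"
  unfolding perfect_matching_def by (elim conjE) (intro conjI; blast)

definition mate :: "('e \<Rightarrow> 'v set) \<Rightarrow> 'e set \<Rightarrow> 'v \<Rightarrow> 'v" where
  "mate ends M v = (THE y. \<exists>f\<in>M. ends f = {v, y})"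

context
  fixes V E ends M
  assumes gr: "graph V E ends" and pm: "perfect_matching V E ends M"
begin

lemma mate_spec:
  assumes v: "v \<in> V"
  shows "\<exists>f\<in>M. ends f = {v, mate ends M v}" "mate ends M v \<noteq> v"
proof -
  obtain f where f: "f \<in> M" "v \<in> ends f"
    and uniq: "\<And>g. g \<in> M \<Longrightarrow> v \<in> ends g \<Longrightarrow> g = f"
    using pm v unfolding perfect_matching_def by blast
  have "card (ends f) = 2" using f(1) pm graph_edge[OF gr] unfolding perfect_matching_def by blast
  then obtain y where y: "y \<noteq> v" "ends f = {v, y}" using f(2) edge_other_end by metis
  have "mate ends M v = y" unfolding mate_def
  proof (rule the_equality)
    fix z assume "\<exists>g\<in>M. ends g = {v, z}"
    then obtain g where "g \<in> M" "ends g = {v, z}" by blast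
    then have "{v, z} = {v, y}" using uniq y(2) by simp
    then show "z = y" using y(1) by (auto simp: doubleton_eq_iff)
  qed (use f y in blast)
  then show "\<exists>f\<in>M. ends f = {v, mate ends M v}" "mate ends M v \<noteq> v" using f y by auto
qed

lemma mate_eqI:
  assumes "v \<in> V" "f \<in> M" "ends f = {v, y}"
  shows "mate ends M v = y"
proof -
  obtain g where g: "g \<in> M" "ends g = {v, mate ends M v}" using mate_spec(1)[OF assms(1)] by blast
  have "g = f" using pm assms g unfolding perfect_matching_def by blast
  then have "{v, mate ends M v} = {v, y}" using g assms by simp
  then show ?thesis using mate_spec(2)[OF assms(1)] by (auto simp: doubleton_eq_iff)
qed

lemma mate_in_V: "v \<in> V \<Longrightarrow> mate ends M v \<in> V"
  using mate_spec(1) pm graph_edge[OF gr] unfolding perfect_matching_def by blast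

lemma mate_mate:
  assumes "v \<in> V" shows "mate ends M (mate ends M v) = v"
proof -
  obtain f where "f \<in> M" "ends f = {mate ends M v, v}"
    using mate_spec(1)[OF assms] by (auto simp: insert_commute)
  then show ?thesis using mate_eqI mate_in_V[OF assms] by blast
qed

lemma inj_on_mate: "inj_on (mate ends M) V"
  by (rule inj_on_inverseI[of _ "mate ends M"]) (rule mate_mate)

end

lemma even_card_involution:
  assumes "finite K" "\<forall>v\<in>K. g v \<in> K \<and> g v \<noteq> v \<and> g (g v) = v"
  shows "even (card K)"
  using assms
proof (induction "card K" arbitrary: K rule: less_induct)
  case less
  show ?case
  proof (cases "K = {}")
    case False
    then obtain v where v: "v \<in> K" by blast
    define K' where "K' = K - {v, g v}"
    have gv: "g v \<in> K" "g v \<noteq> v" using less.prems v by auto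
    then have cK: "card K = card K' + 2"
      using less.prems(1) v card_Diff_subset[of "{v, g v}" K] card_mono[of K "{v, g v}"]
      unfolding K'_def by auto
    have "\<forall>x\<in>K'. g x \<in> K' \<and> g x \<noteq> x \<and> g (g x) = x"
    proof
      fix x assume "x \<in> K'"
      then have x: "x \<in> K" "x \<noteq> v" "x \<noteq> g v" unfolding K'_def by auto
      then have gx: "g x \<in> K" "g x \<noteq> x" "g (g x) = x" using less.prems(2) by auto
      have "g x \<noteq> g v"
      proof
        assume "g x = g v"
        then have "g (g x) = g (g v)" by simp
        then show False using gx(3) x(2) less.prems(2) v by simp
      qed
      then show "g x \<in> K' \<and> g x \<noteq> x \<and> g (g x) = x"
        using gx x(3) unfolding K'_def by auto
    qed
    then have "even (card K')"
      using less.hyps[of K'] less.prems(1) cK unfolding K'_def by simp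
    then show ?thesis using cK by simp
  qed simp
qed

lemma odd_component_matched_outside:
  assumes gr: "graph V E ends" and pm: "perfect_matching V E ends M"
    and C: "C \<in> components (V - S) (edges_avoiding E ends S) ends" and od: "odd (card C)"
  shows "\<exists>v\<in>C. mate ends M v \<in> S"
proof (rule ccontr)
  assume inside: "\<not> (\<exists>v\<in>C. mate ends M v \<in> S)"
  have CV: "C \<subseteq> V - S" using component_subset[OF C] .
  have "mate ends M v \<in> C \<and> mate ends M v \<noteq> v \<and> mate ends M (mate ends M v) = v"
    if v: "v \<in> C" for v
  proof -
    have vV: "v \<in> V" using CV v by blast
    obtain f where f: "f \<in> M" "ends f = {v, mate ends M v}" using mate_spec(1)[OF gr pm vV] by blast
    have "f \<in> edges_avoiding E ends S"
      using f pm CV v inside unfolding perfect_matching_def edges_avoiding_def by auto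
    then have "mate ends M v \<in> C"
      using component_edge_closed[OF C v _ f(2)] mate_in_V[OF gr pm vV] inside v by blast
    then show ?thesis using mate_spec(2)[OF gr pm vV] mate_mate[OF gr pm vV] by blast
  qed
  moreover have "finite C"
    using finite_component[OF _ C] gr unfolding graph_def by blast
  ultimately have "even (card C)" using even_card_involution by blast
  then show False using od by simp
qed

lemma card_odd_components_le:
  assumes gr: "graph V E ends" and pm: "perfect_matching V E ends M" and S: "S \<subseteq> V"
  shows "card {C \<in> components (V - S) (edges_avoiding E ends S) ends. odd (card C)} \<le> card S"
proof -
  define OC where "OC = {C \<in> components (V - S) (edges_avoiding E ends S) ends. odd (card C)}"
  define exit where "exit C = (SOME v. v \<in> C \<and> mate ends M v \<in> S)" for C
  have exit: "exit C \<in> C \<and> mate ends M (exit C) \<in> S" if "C \<in> OC" for C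
  proof -
    have "\<exists>v. v \<in> C \<and> mate ends M v \<in> S"
      using odd_component_matched_outside[OF gr pm] that unfolding OC_def by blast
    then show ?thesis unfolding exit_def by (rule someI_ex)
  qed
  have "inj_on (mate ends M \<circ> exit) OC"
  proof (rule inj_onI)
    fix C1 C2 assume C: "C1 \<in> OC" "C2 \<in> OC" "(mate ends M \<circ> exit) C1 = (mate ends M \<circ> exit) C2"
    have "exit C1 \<in> V" "exit C2 \<in> V"
      using C(1,2) exit component_subset unfolding OC_def by blast+
    then have "exit C1 = exit C2" using C(3) inj_on_mate[OF gr pm] by (simp add: inj_on_eq_iff)
    then show "C1 = C2"
      using C(1,2) exit components_disjoint unfolding OC_def by (metis (no_types, lifting) mem_Collect_eq)
  qed
  moreover have "(mate ends M \<circ> exit) ` OC \<subseteq> S" using exit by auto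
  moreover have "finite S" using S gr finite_subset unfolding graph_def by blast
  ultimately show ?thesis unfolding OC_def[symmetric] using card_inj_on_le by blast
qed

section \<open>Barriers and bricks\<close>

lemma three_connected_neighbours:
  assumes gr: "graph V E ends" and tc: "three_connected V E ends" and z: "z \<in> V"
    and N: "finite N" and nb: "\<forall>f\<in>E. z \<in> ends f \<longrightarrow> ends f \<subseteq> insert z N"
  shows "3 \<le> card N"
proof (rule ccontr)
  assume "\<not> 3 \<le> card N"
  define S where "S = N \<inter> V - {z}"
  have SV: "S \<subseteq> V" unfolding S_def by blast
  have fV: "finite V" using gr unfolding graph_def by blast
  have "card S \<le> card N" using N by (intro card_mono) (auto simp: S_def)
  then have cS: "card S \<le> 2" using \<open>\<not> 3 \<le> card N\<close> by linarith
  then have con: "connected_graph (V - S) (edges_avoiding E ends S) ends"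
    using tc SV unfolding three_connected_def by simp
  have zS: "z \<in> V - S" using z unfolding S_def by blast
  have "card (V - S) \<ge> 2"
    using card_Diff_subset[OF finite_subset[OF SV fV] SV] tc cS unfolding three_connected_def by linarith
  then have "card (V - S - {z}) \<noteq> 0" using zS fV by (simp add: card_Diff_singleton)
  then have "V - S - {z} \<noteq> {}" by (metis card.empty)
  then obtain t where t: "t \<in> V - S" "t \<noteq> z" by blast
  have "(z, t) \<in> (adj_rel (V - S) (edges_avoiding E ends S) ends)\<^sup>*"
    using con zS t(1) unfolding connected_graph_def by blast
  then show False
  proof (cases rule: converse_rtranclE)
    case (step z')
    then obtain f where f: "f \<in> E" "ends f = {z, z'}" "z' \<in> V - S"
      unfolding adj_rel_def edges_avoiding_def by blast
    have "z' \<noteq> z" using graph_edge[OF gr f(1)] f(2) by auto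
    then show False using nb f unfolding S_def by blast
  qed (use t in simp)
qed

text \<open>\<open>N\<close> has two vertices \<open>x, y\<close> by 3-connectivity, and a perfect matching of \<open>G - x - y\<close>
  matches \<open>Z\<close> injectively into \<open>N - {x, y}\<close>.\<close>

lemma brick_neighbourhood_bound:
  assumes br: "brick V E ends" and Z: "Z \<subseteq> V" "Z \<noteq> {}" and NV: "N \<subseteq> V"
    and ZN: "Z \<inter> N = {}" and nb: "\<forall>f\<in>E. \<forall>z\<in>Z. z \<in> ends f \<longrightarrow> ends f \<subseteq> insert z N"
  shows "card Z + 2 \<le> card N"
proof -
  have gr: "graph V E ends" using br unfolding brick_def by blast
  have fN: "finite N" using finite_subset[OF NV] gr unfolding graph_def by blast
  obtain z0 where "z0 \<in> Z" using Z by blast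
  then have N3: "3 \<le> card N"
    using three_connected_neighbours[OF gr _ _ fN] br Z nb unfolding brick_def by blast
  then obtain x where x: "x \<in> N" by fastforce
  then have "card (N - {x}) \<noteq> 0" using N3 fN by (simp add: card_Diff_singleton)
  then have "N - {x} \<noteq> {}" by (metis card.empty)
  then obtain y where "y \<in> N - {x}" by blast
  with x have xy: "x \<in> N" "y \<in> N" "x \<noteq> y" by auto
  define V' where "V' = V - {x, y}"
  define E' where "E' = edges_avoiding E ends {x, y}"
  obtain P where P: "perfect_matching V' E' ends P"
    using br xy NV unfolding brick_def has_pm_def V'_def E'_def by blast
  have gr': "graph V' E' ends" unfolding V'_def E'_def by (rule graph_delete_vertices[OF gr])
  have ZV': "Z \<subseteq> V'" using Z(1) ZN xy unfolding V'_def by blast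
  have "mate ends P z \<in> N - {x, y}" if z: "z \<in> Z" for z
  proof -
    have zV: "z \<in> V'" using ZV' z by blast
    obtain f where f: "f \<in> P" "ends f = {z, mate ends P z}" using mate_spec(1)[OF gr' P zV] by blast
    have "f \<in> E" using f(1) P unfolding perfect_matching_def E'_def edges_avoiding_def by blast
    then have "mate ends P z \<in> insert z N" using nb z f(2) by blast
    then show ?thesis
      using mate_spec(2)[OF gr' P zV] mate_in_V[OF gr' P zV] unfolding V'_def by blast
  qed
  then have "card Z \<le> card (N - {x, y})"
    using card_inj_on_le[OF inj_on_subset[OF inj_on_mate[OF gr' P] ZV']] fN by blast
  also have "\<dots> = card N - 2" using xy fN by (simp add: card_Diff_subset)
  finally show ?thesis using N3 by linarith
qed

lemma odd_components_after_extension: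
  assumes K: "K \<in> components (V - B) (edges_avoiding E ends B) ends" and YK: "Y \<subseteq> K"
    and iso: "\<forall>x\<in>K - Y. \<forall>f\<in>E. x \<in> ends f \<longrightarrow> ends f \<inter> (B \<union> Y) \<noteq> {}"
  defines "OC S \<equiv> {C \<in> components (V - S) (edges_avoiding E ends S) ends. odd (card C)}"
  shows "OC B - {K} \<subseteq> OC (B \<union> Y)" "(\<lambda>x. {x}) ` (K - Y) \<subseteq> OC (B \<union> Y)"
    "(OC B - {K}) \<inter> (\<lambda>x. {x}) ` (K - Y) = {}"
proof -
  have KV: "K \<subseteq> V - B" using component_subset[OF K] .
  show "OC B - {K} \<subseteq> OC (B \<union> Y)"
  proof
    fix L assume L: "L \<in> OC B - {K}"
    then have LC: "L \<in> components (V - B) (edges_avoiding E ends B) ends" "L \<noteq> K"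
      unfolding OC_def by auto
    then have "L \<inter> K = {}" using components_disjoint[OF LC(1) K] by blast
    moreover have "L \<inter> B = {}" using component_subset[OF LC(1)] by blast
    ultimately have "L \<inter> (B \<union> Y) = {}" using YK by blast
    then show "L \<in> OC (B \<union> Y)"
      using L component_of_larger_deletion[OF _ LC(1)] unfolding OC_def by simp
  qed
  show "(\<lambda>x. {x}) ` (K - Y) \<subseteq> OC (B \<union> Y)"
  proof
    fix C assume "C \<in> (\<lambda>x. {x}) ` (K - Y)"
    then obtain x where x: "x \<in> K - Y" "C = {x}" by blast
    have "\<forall>f\<in>edges_avoiding E ends (B \<union> Y). \<forall>y. ends f = {x, y} \<longrightarrow> y \<notin> V - (B \<union> Y)"
    proof (intro ballI allI impI)
      fix f y assume f: "f \<in> edges_avoiding E ends (B \<union> Y)" "ends f = {x, y}"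
      then show "y \<notin> V - (B \<union> Y)"
        using iso[rule_format, of x f] x(1) unfolding edges_avoiding_def by auto
    qed
    moreover have "x \<in> V - (B \<union> Y)" using x KV by blast
    ultimately have "{x} \<in> components (V - (B \<union> Y)) (edges_avoiding E ends (B \<union> Y)) ends"
      by (rule isolated_vertex_component[rotated])
    then show "C \<in> OC (B \<union> Y)" using x unfolding OC_def by simp
  qed
  show "(OC B - {K}) \<inter> (\<lambda>x. {x}) ` (K - Y) = {}"
  proof (rule ccontr)
    assume "(OC B - {K}) \<inter> (\<lambda>x. {x}) ` (K - Y) \<noteq> {}"
    then obtain x where "{x} \<in> components (V - B) (edges_avoiding E ends B) ends" "{x} \<noteq> K" "x \<in> K"
      unfolding OC_def by auto
    then show False using components_disjoint[OF _ K, of "{x}" x] by simp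
  qed
qed

lemma barrier_extend:
  assumes gr: "graph V E ends" and bar: "barrier V E ends B"
    and K: "K \<in> components (V - B) (edges_avoiding E ends B) ends" and YK: "Y \<subseteq> K"
    and iso: "\<forall>x\<in>K - Y. \<forall>f\<in>E. x \<in> ends f \<longrightarrow> ends f \<inter> (B \<union> Y) \<noteq> {}"
    and cnt: "card Y + (if odd (card K) then 1 else 0) \<le> card (K - Y)"
  shows "barrier V E ends (B \<union> Y)"
proof -
  define OC where "OC S = {C \<in> components (V - S) (edges_avoiding E ends S) ends. odd (card C)}" for S
  note ext = odd_components_after_extension[OF K YK iso, folded OC_def]
  have fV: "finite V" using gr unfolding graph_def by blast
  have BV: "B \<subseteq> V" and cB: "card (OC B) = card B"
    using bar unfolding barrier_def OC_def by auto
  obtain M where M: "perfect_matching V E ends M" using bar unfolding barrier_def has_pm_def by blast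
  have KV: "K \<subseteq> V - B" using component_subset[OF K] .
  have BYV: "B \<union> Y \<subseteq> V" using BV YK KV by blast
  have fOC: "finite (OC S)" for S
    unfolding OC_def by (rule finite_subset[OF _ finite_components[OF finite_Diff[OF fV]]]) auto
  have "card (OC B - {K}) + (if odd (card K) then 1 else 0) = card (OC B)"
  proof (cases "odd (card K)")
    case True
    then have "K \<in> OC B" using K unfolding OC_def by blast
    then have "0 < card (OC B)" using fOC[of B] card_gt_0_iff by blast
    then show ?thesis using \<open>K \<in> OC B\<close> True by (simp add: card_Diff_singleton)
  qed (simp add: OC_def)
  moreover have "card ((\<lambda>x. {x}) ` (K - Y)) = card (K - Y)" by (simp add: card_image)
  moreover have "card (OC B - {K}) + card ((\<lambda>x. {x}) ` (K - Y)) \<le> card (OC (B \<union> Y))"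
    using ext fOC[of "B \<union> Y"] fOC[of B] by (subst card_Un_disjoint[symmetric]) (auto intro: card_mono finite_subset)
  moreover have "card (B \<union> Y) = card B + card Y"
    using KV YK finite_subset[OF BV fV] finite_subset[OF YK] finite_subset[OF KV] fV
    by (subst card_Un_disjoint) auto
  moreover have "card (OC (B \<union> Y)) \<le> card (B \<union> Y)"
    using card_odd_components_le[OF gr M BYV] unfolding OC_def .
  ultimately have "card (OC (B \<union> Y)) = card (B \<union> Y)" using cB cnt by linarith
  then show ?thesis using bar BYV unfolding barrier_def OC_def by auto
qed

section \<open>The type II decomposition\<close>

definition one_more_in :: "'v set \<Rightarrow> 'v set \<Rightarrow> 'v set \<Rightarrow> bool" where
  "one_more_in X Y K \<longleftrightarrow> card (K \<inter> X) = card (K \<inter> Y) + 1"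

locale type_II_decomposition =
  fixes V :: "'v set" and E :: "'e set" and ends :: "'e \<Rightarrow> 'v set"
    and e1 e2 e estar :: 'e and U W B :: "'v set" and u w :: 'v
  assumes brick: "brick V E ends"
    and H_matching_covered: "matching_covered V (E - {e1, e2}) ends"
    and e1_edge: "e1 \<in> E" and e2_edge: "e2 \<in> E"
    and U_W_partition: "U \<union> W = V" "U \<inter> W = {}"
    and H_edge: "\<forall>f\<in>E - {e1, e2}. \<exists>x\<in>U. \<exists>y\<in>W. ends f = {x, y}"
    and e1_U: "ends e1 \<subseteq> U" and e2_W: "ends e2 \<subseteq> W"
    and e_edge: "e \<in> E" "e \<notin> {e1, e2}"
    and e_ends: "ends e = {u, w}" and u_U: "u \<in> U" and w_W: "w \<in> W"
    and estar_edge: "estar \<in> E - {e, e1, e2}"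
    and barrier_B: "barrier V (E - {e}) ends B" and B_estar: "ends estar \<subseteq> B"
    and B_maximal: "\<forall>B'. barrier V (E - {e}) ends B' \<and> ends estar \<subseteq> B' \<and> B \<subseteq> B' \<longrightarrow> B' = B"
begin

abbreviation "comps \<equiv> components (V - B) (edges_avoiding (E - {e}) ends B) ends"
abbreviation "U_heavy \<equiv> one_more_in U W"
abbreviation "W_heavy \<equiv> one_more_in W U"
abbreviation "U2 \<equiv> {v \<in> U. {v} \<in> comps}"
abbreviation "W1 \<equiv> {v \<in> W. {v} \<in> comps}"

text \<open>Everything below has a mirror image obtained by exchanging the roles of \<open>e1, U, u\<close> and
  \<open>e2, W, w\<close>.\<close>

lemma swap: "type_II_decomposition V E ends e2 e1 e estar W U B w u"
proof
  show "matching_covered V (E - {e2, e1}) ends" using H_matching_covered by (simp add: insert_commute)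
  show "W \<union> U = V" "W \<inter> U = {}" using U_W_partition by blast+
  show "\<forall>f\<in>E - {e2, e1}. \<exists>x\<in>W. \<exists>y\<in>U. ends f = {x, y}"
    using H_edge by (metis insert_commute)
  show "e \<notin> {e2, e1}" using e_edge by blast
  show "ends e = {w, u}" using e_ends by (simp add: insert_commute)
  show "estar \<in> E - {e, e2, e1}" using estar_edge by blast
qed (fact brick e1_edge e2_edge e1_U e2_W e_edge(1) u_U w_W barrier_B B_estar B_maximal)+

lemma graph_G: "graph V E ends" using brick unfolding brick_def by blast
lemma finite_V: "finite V" using graph_G unfolding graph_def by blast
lemma ends_edge: "f \<in> E \<Longrightarrow> ends f \<subseteq> V" "f \<in> E \<Longrightarrow> card (ends f) = 2"
  using graph_edge[OF graph_G] by blast+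

lemma B_subset: "B \<subseteq> V" using barrier_B unfolding barrier_def by blast
lemma finite_B: "finite B" using finite_subset[OF B_subset finite_V] .

lemma comp_subset: "K \<in> comps \<Longrightarrow> K \<subseteq> V - B" by (rule component_subset)
lemma finite_comps: "finite comps" using finite_components finite_V by blast
lemma finite_comp: "K \<in> comps \<Longrightarrow> finite K" using finite_component[of "V - B"] finite_V by blast

lemma comp_edge_closed:
  assumes K: "K \<in> comps" and x: "x \<in> K" and f: "f \<in> E - {e}" "ends f = {x, y}" and y: "y \<notin> B"
  shows "y \<in> K"
proof -
  have "y \<in> V" using ends_edge(1)[of f] f by auto
  moreover have "f \<in> edges_avoiding (E - {e}) ends B"
    using f y comp_subset[OF K] x unfolding edges_avoiding_def by auto
  ultimately show ?thesis using component_edge_closed[OF K x _ f(2)] y by blast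
qed

lemma comp_card_U_W:
  assumes "K \<in> comps" shows "card K = card (K \<inter> U) + card (K \<inter> W)"
proof -
  have "K = (K \<inter> U) \<union> (K \<inter> W)" using comp_subset[OF assms] U_W_partition by blast
  then show ?thesis using finite_comp[OF assms] U_W_partition(2)
    by (metis card_Un_disjoint finite_Int inf_assoc inf_bot_right inf_left_commute)
qed

lemma e1_card: "card (ends e1) = 2" using ends_edge(2)[OF e1_edge] .

lemma estar_ends: obtains x0 y0 where "x0 \<in> U \<inter> B" "y0 \<in> W \<inter> B" "ends estar = {x0, y0}"
proof -
  obtain x0 y0 where "x0 \<in> U" "y0 \<in> W" "ends estar = {x0, y0}"
    using H_edge estar_edge by blast
  then show thesis using that B_estar by blast
qed

lemma U2_subset: "U2 \<subseteq> V" using U_W_partition by blast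

lemma u_has_H_edge: "\<exists>f\<in>E - {e1, e2} - {e}. u \<in> ends f"
proof (rule ccontr)
  assume none: "\<not> ?thesis"
  obtain N where N: "finite N" "card N \<le> 2" "\<forall>f\<in>{e, e1}. u \<in> ends f \<longrightarrow> ends f \<subseteq> insert u N"
  proof (cases "u \<in> ends e1")
    case True
    then obtain y where "ends e1 = {u, y}" using edge_other_end[of ends e1 u] e1_card by metis
    then show thesis using that[of "{w, y}"] e_ends by (auto simp: card_insert_if)
  qed (use that[of "{w}"] e_ends in auto)
  moreover have "\<forall>f\<in>E. u \<in> ends f \<longrightarrow> ends f \<subseteq> insert u N"
    using N(3) none e2_W u_U U_W_partition(2) by blast
  moreover have "three_connected V E ends" using brick unfolding brick_def by blast
  moreover have "u \<in> V" using u_U U_W_partition(1) by blast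
  ultimately have "3 \<le> card N" using three_connected_neighbours[OF graph_G] by blast
  then show False using N(2) by linarith
qed

lemma H_minus_e_has_pm: "\<exists>M. perfect_matching V (E - {e1, e2} - {e}) ends M"
proof -
  obtain f where f: "f \<in> E - {e1, e2} - {e}" "u \<in> ends f" using u_has_H_edge by blast
  then obtain P where P: "perfect_matching V (E - {e1, e2}) ends P" "f \<in> P"
    using H_matching_covered unfolding matching_covered_def admissible_def by blast
  have "e \<notin> P"
  proof
    assume "e \<in> P"
    then have "e = f" using P f e_ends u_U U_W_partition unfolding perfect_matching_def by blast
    then show False using f by blast
  qed
  then have "perfect_matching V (E - {e1, e2} - {e}) ends P"
    using P unfolding perfect_matching_def by blast
  then show ?thesis by blast
qed

definition M0 :: "'e set" where
  "M0 = (SOME M. perfect_matching V (E - {e1, e2} - {e}) ends M)"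

definition q :: "'v \<Rightarrow> 'v" where
  "q = mate ends M0"

lemma M0_perfect_matching: "perfect_matching V (E - {e1, e2} - {e}) ends M0"
  unfolding M0_def using H_minus_e_has_pm by (rule someI_ex)

lemma graph_H_minus_e: "graph V (E - {e1, e2} - {e}) ends"
  by (rule graph_subset[OF graph_G]) blast

lemma q_in_V: "v \<in> V \<Longrightarrow> q v \<in> V"
  unfolding q_def by (rule mate_in_V[OF graph_H_minus_e M0_perfect_matching])

lemma q_q: "v \<in> V \<Longrightarrow> q (q v) = v"
  unfolding q_def by (rule mate_mate[OF graph_H_minus_e M0_perfect_matching])

lemma inj_on_q: "inj_on q V"
  unfolding q_def by (rule inj_on_mate[OF graph_H_minus_e M0_perfect_matching])

lemma q_edge:
  assumes "v \<in> V" shows "\<exists>f\<in>E - {e1, e2} - {e}. ends f = {v, q v}"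
proof -
  obtain f where "f \<in> M0" "ends f = {v, q v}"
    using mate_spec(1)[OF graph_H_minus_e M0_perfect_matching assms] unfolding q_def by blast
  moreover have "M0 \<subseteq> E - {e1, e2} - {e}"
    using M0_perfect_matching unfolding perfect_matching_def by (rule conjunct1)
  ultimately show ?thesis by blast
qed

lemma q_U: assumes "v \<in> V" "v \<in> U" shows "q v \<in> W"
proof -
  obtain f where f: "f \<in> E - {e1, e2}" "ends f = {v, q v}" using q_edge[OF assms(1)] by blast
  obtain x y where "x \<in> U" "y \<in> W" "ends f = {x, y}" using H_edge f(1) by blast
  then show ?thesis using f(2) assms(2) U_W_partition(2) by (auto simp: doubleton_eq_iff)
qed

lemma q_W: assumes "v \<in> V" "v \<in> W" shows "q v \<in> U"
proof -
  obtain f where f: "f \<in> E - {e1, e2}" "ends f = {v, q v}" using q_edge[OF assms(1)] by blast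
  obtain x y where "x \<in> U" "y \<in> W" "ends f = {x, y}" using H_edge f(1) by blast
  then show ?thesis using f(2) assms(2) U_W_partition(2) by (auto simp: doubleton_eq_iff)
qed

lemma q_stays_in_comp:
  assumes K: "K \<in> comps" and v: "v \<in> K" and "q v \<notin> B" shows "q v \<in> K"
proof -
  have "v \<in> V" using comp_subset[OF K] v by blast
  then obtain f where "f \<in> E - {e1, e2} - {e}" "ends f = {v, q v}" using q_edge by blast
  then show ?thesis using comp_edge_closed[OF K v] assms(3) by blast
qed

definition exits :: "'v set \<Rightarrow> 'v set" where
  "exits K = {v \<in> K. q v \<in> B}"

lemma exits_subset: "exits K \<subseteq> K"
  unfolding exits_def by blast

lemma odd_comp_has_exit:
  assumes "K \<in> comps" "odd (card K)" shows "exits K \<noteq> {}"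
proof -
  have "perfect_matching V (E - {e}) ends M0"
    using perfect_matching_mono[OF M0_perfect_matching] by blast
  then have "\<exists>v\<in>K. mate ends M0 v \<in> B"
    using odd_component_matched_outside[OF graph_subset[OF graph_G] _ assms] by blast
  then show ?thesis unfolding exits_def q_def by blast
qed

lemma card_Union_exits: "card (\<Union>K\<in>comps. exits K) = (\<Sum>K\<in>comps. card (exits K))"
proof (rule card_UN_disjoint)
  show "\<forall>K\<in>comps. finite (exits K)"
    using finite_comp exits_subset finite_subset by blast
  show "\<forall>K1\<in>comps. \<forall>K2\<in>comps. K1 \<noteq> K2 \<longrightarrow> exits K1 \<inter> exits K2 = {}"
  proof (intro ballI impI)
    fix K1 K2 assume "K1 \<in> comps" "K2 \<in> comps" "K1 \<noteq> K2"
    then show "exits K1 \<inter> exits K2 = {}"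
      using components_disjoint[of K1 _ _ _ K2] exits_subset[of K1] exits_subset[of K2] by blast
  qed
qed (rule finite_comps)

lemma Union_exits_subset: "(\<Union>K\<in>comps. exits K) \<subseteq> q ` B"
proof
  fix v assume "v \<in> (\<Union>K\<in>comps. exits K)"
  then obtain K where "K \<in> comps" "v \<in> K" "q v \<in> B" unfolding exits_def by blast
  then have "v = q (q v)" "q v \<in> B" using comp_subset[of K] q_q[of v] by auto
  then show "v \<in> q ` B" by blast
qed

lemma card_q_B: "card (q ` B) = card B"
  using card_image[OF inj_on_subset[OF inj_on_q B_subset]] .

lemma card_B_eq_sum: "card B = (\<Sum>K\<in>comps. if odd (card K) then 1 else 0)"
proof -
  have "card B = card {K \<in> comps. odd (card K)}" using barrier_B unfolding barrier_def by simp
  also have "\<dots> = (\<Sum>K\<in>{K \<in> comps. odd (card K)}. 1)" by simp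
  also have "\<dots> = (\<Sum>K\<in>comps. if odd (card K) then 1 else 0)" by (rule sum.inter_filter[OF finite_comps])
  finally show ?thesis .
qed

text \<open>The matching \<open>M0\<close> leaves every odd component of \<open>G - e - B\<close> through an edge to \<open>B\<close>, and
  there are only \<open>|B|\<close> such edges: so odd components have exactly one exit and even components
  none.\<close>

lemma card_exits:
  assumes "K \<in> comps" shows "card (exits K) = (if odd (card K) then 1 else 0)"
proof -
  define g :: "'v set \<Rightarrow> nat" where "g K = (if odd (card K) then 1 else 0)" for K
  have g_le: "g K \<le> card (exits K)" if "K \<in> comps" for K
    using odd_comp_has_exit[OF that] finite_subset[OF exits_subset finite_comp[OF that]]
    unfolding g_def by (simp add: Suc_le_eq card_gt_0_iff)
  have "(\<Sum>K\<in>comps. card (exits K)) \<le> (\<Sum>K\<in>comps. g K)"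
    using card_mono[OF finite_imageI[OF finite_B] Union_exits_subset]
    unfolding card_Union_exits card_q_B card_B_eq_sum g_def .
  then have eq: "(\<Sum>K\<in>comps. g K) = (\<Sum>K\<in>comps. card (exits K))"
    using sum_mono[of comps g "\<lambda>K. card (exits K)"] g_le by simp
  show ?thesis
    using sum_mono_inv[OF eq g_le assms finite_comps] by (simp add: g_def)
qed

lemma Union_exits_eq: "(\<Union>K\<in>comps. exits K) = q ` B"
proof (rule card_subset_eq[OF finite_imageI[OF finite_B] Union_exits_subset])
  show "card (\<Union>K\<in>comps. exits K) = card (q ` B)"
    unfolding card_Union_exits card_q_B card_B_eq_sum using card_exits by simp
qed

lemma q_B: "b \<in> B \<Longrightarrow> q b \<notin> B"
  using Union_exits_eq comp_subset exits_subset by blast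

text \<open>\<open>q\<close> pairs the non-exit vertices of a component inside the component, across the bipartition.\<close>

lemma exits_balance:
  assumes K: "K \<in> comps"
  shows "card (K \<inter> U) + card (exits K \<inter> W) = card (K \<inter> W) + card (exits K \<inter> U)"
proof -
  define A where "A = K \<inter> U - exits K"
  define A' where "A' = K \<inter> W - exits K"
  have KV: "K \<subseteq> V - B" using comp_subset[OF K] .
  have fin: "finite K" "finite (exits K)"
    using finite_comp[OF K] finite_subset[OF exits_subset finite_comp[OF K]] by blast+
  have q_A: "q v \<in> K - exits K" if "v \<in> K - exits K" for v
  proof -
    have v: "v \<in> V" "q v \<notin> B" using that KV unfolding exits_def by auto
    then show ?thesis using q_stays_in_comp[OF K] that q_q[OF v(1)] KV unfolding exits_def by auto
  qed
  have "bij_betw q A A'"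
  proof (rule bij_betw_byWitness[where f' = q])
    show "\<forall>a\<in>A. q (q a) = a" "\<forall>a\<in>A'. q (q a) = a" unfolding A_def A'_def using KV q_q by auto
    show "q ` A \<subseteq> A'" unfolding A_def A'_def using q_A q_U KV by blast
    show "q ` A' \<subseteq> A" unfolding A_def A'_def using q_A q_W KV by blast
  qed
  then have "card A = card A'" by (rule bij_betw_same_card)
  moreover have "card (K \<inter> U) = card A + card (exits K \<inter> U)"
    unfolding A_def using fin exits_subset[of K]
    by (subst card_Un_disjoint[symmetric]) (auto intro: arg_cong[where f = card])
  moreover have "card (K \<inter> W) = card A' + card (exits K \<inter> W)"
    unfolding A'_def using fin exits_subset[of K]
    by (subst card_Un_disjoint[symmetric]) (auto intro: arg_cong[where f = card])
  ultimately show ?thesis by linarith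
qed

lemma even_comp_balanced:
  assumes "K \<in> comps" "even (card K)" shows "card (K \<inter> U) = card (K \<inter> W)"
proof -
  have "exits K = {}"
    using card_exits[OF assms(1)] assms(2) finite_subset[OF exits_subset finite_comp[OF assms(1)]]
    by simp
  then show ?thesis using exits_balance[OF assms(1)] by simp
qed

lemma odd_comp_heavy:
  assumes K: "K \<in> comps" and "odd (card K)"
  shows "\<exists>v. exits K = {v} \<and> v \<in> K \<and> (v \<in> U \<longrightarrow> U_heavy K) \<and> (v \<in> W \<longrightarrow> W_heavy K)"
proof -
  obtain v where v: "exits K = {v}" using card_exits[OF K] assms(2) card_1_singletonE by auto
  then have "v \<in> K" using exits_subset by blast
  moreover have "U_heavy K" if "v \<in> U"
  proof -
    have "exits K \<inter> U = {v}" "exits K \<inter> W = {}" using v that U_W_partition(2) by auto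
    then show ?thesis using exits_balance[OF K] unfolding one_more_in_def by simp
  qed
  moreover have "W_heavy K" if "v \<in> W"
  proof -
    have "exits K \<inter> W = {v}" "exits K \<inter> U = {}" using v that U_W_partition(2) by auto
    then show ?thesis using exits_balance[OF K] unfolding one_more_in_def by simp
  qed
  ultimately show ?thesis using v by blast
qed

lemma comp_heaviness:
  assumes "K \<in> comps"
  shows "U_heavy K \<or> W_heavy K \<or> card (K \<inter> U) = card (K \<inter> W)"
proof (cases "odd (card K)")
  case True
  then obtain v where "exits K = {v}" "v \<in> K" "v \<in> U \<longrightarrow> U_heavy K" "v \<in> W \<longrightarrow> W_heavy K"
    using odd_comp_heavy[OF assms] by blast
  then show ?thesis using comp_subset[OF assms] U_W_partition(1) by blast
qed (use even_comp_balanced[OF assms] in simp)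

lemma U_heavy_exit:
  assumes K: "K \<in> comps" and "U_heavy K" obtains v where "exits K = {v}" "v \<in> U"
proof -
  have "odd (card K)" using comp_card_U_W[OF K] assms(2) unfolding one_more_in_def by simp
  then obtain v where v: "exits K = {v}" "v \<in> K" "v \<in> U \<longrightarrow> U_heavy K" "v \<in> W \<longrightarrow> W_heavy K"
    using odd_comp_heavy[OF K] by blast
  then have "v \<in> U" using comp_subset[OF K] U_W_partition(1) assms(2) unfolding one_more_in_def by auto
  then show thesis using that v(1) by blast
qed

lemma exit_in_U_U_heavy:
  assumes K: "K \<in> comps" and "v \<in> exits K" "v \<in> U" shows "U_heavy K"
proof -
  have "odd (card K)"
    using card_exits[OF K] assms(2) finite_subset[OF exits_subset finite_comp[OF K]]
    by (cases "odd (card K)") auto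
  then obtain v' where "exits K = {v'}" "v' \<in> K" "v' \<in> U \<longrightarrow> U_heavy K" "v' \<in> W \<longrightarrow> W_heavy K"
    using odd_comp_heavy[OF K] by blast
  then show ?thesis using assms(2,3) by simp
qed

text \<open>The \<open>U\<close>-heavy components correspond to the vertices of \<open>B \<inter> W\<close> via their exit.\<close>

lemma card_U_heavy_comps: "card {K \<in> comps. U_heavy K} = card (B \<inter> W)"
proof -
  define comp_of where "comp_of v = component_of (V - B) (edges_avoiding (E - {e}) ends B) ends v" for v
  have exit: "q y \<in> exits (comp_of (q y))" "comp_of (q y) \<in> comps" if y: "y \<in> B" for y
  proof -
    have yV: "y \<in> V" using y B_subset by blast
    then have qV: "q y \<in> V - B" using q_in_V q_B y by blast
    show "q y \<in> exits (comp_of (q y))"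
      unfolding exits_def comp_of_def using in_component_of[OF qV] q_q[OF yV] y by simp
    show "comp_of (q y) \<in> comps" unfolding comp_of_def using component_of_in_components[OF qV] .
  qed
  have heavy: "U_heavy (comp_of (q y))" if y: "y \<in> B \<inter> W" for y
    using exit_in_U_U_heavy[OF exit(2) exit(1)] q_W B_subset y by blast
  have "bij_betw (comp_of \<circ> q) (B \<inter> W) {K \<in> comps. U_heavy K}"
  proof (rule bij_betw_imageI)
    show "inj_on (comp_of \<circ> q) (B \<inter> W)"
    proof (rule inj_onI)
      fix y1 y2 assume y: "y1 \<in> B \<inter> W" "y2 \<in> B \<inter> W" "(comp_of \<circ> q) y1 = (comp_of \<circ> q) y2"
      obtain v where "exits (comp_of (q y1)) = {v}" "v \<in> U"
        using U_heavy_exit[OF exit(2) heavy] y(1) by blast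
      then have "q y1 = q y2" using exit(1) y by (metis IntD1 comp_apply singletonD)
      then show "y1 = y2" using y(1,2) B_subset inj_on_q unfolding inj_on_def by blast
    qed
    show "(comp_of \<circ> q) ` (B \<inter> W) = {K \<in> comps. U_heavy K}"
    proof
      show "(comp_of \<circ> q) ` (B \<inter> W) \<subseteq> {K \<in> comps. U_heavy K}" using exit(2) heavy by auto
      show "{K \<in> comps. U_heavy K} \<subseteq> (comp_of \<circ> q) ` (B \<inter> W)"
      proof
        fix K assume K: "K \<in> {K \<in> comps. U_heavy K}"
        then obtain v where v: "exits K = {v}" "v \<in> U" using U_heavy_exit by blast
        then have vK: "v \<in> K" using exits_subset by blast
        then have vV: "v \<in> V" using comp_subset K by blast
        have "q v \<in> B \<inter> W" using v q_U[OF vV v(2)] unfolding exits_def by blast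
        moreover have "comp_of (q (q v)) = K"
          unfolding comp_of_def q_q[OF vV] using component_eq_component_of[of K _ _ _ v] K vK by force
        ultimately show "K \<in> (comp_of \<circ> q) ` (B \<inter> W)" by force
      qed
    qed
  qed
  then show ?thesis by (simp add: bij_betw_same_card)
qed

definition heavy_U :: "'v set" where
  "heavy_U = {v \<in> U. \<exists>K\<in>comps. U_heavy K \<and> v \<in> K}"

definition heavy_W :: "'v set" where
  "heavy_W = {v \<in> W. \<exists>K\<in>comps. U_heavy K \<and> v \<in> K} \<union> (B \<inter> W)"

lemma heavy_U_subset: "heavy_U \<subseteq> V - B"
  unfolding heavy_U_def using comp_subset by blast

lemma heavy_W_subset: "heavy_W \<subseteq> V"
  unfolding heavy_W_def using comp_subset B_subset by blast

lemma q_B_W_in_U_heavy_comp: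
  assumes y: "y \<in> B \<inter> W" shows "\<exists>K\<in>comps. U_heavy K \<and> q y \<in> K"
proof -
  have yV: "y \<in> V" using y B_subset by blast
  then have qV: "q y \<in> V - B" using q_in_V q_B y by blast
  define K where "K = component_of (V - B) (edges_avoiding (E - {e}) ends B) ends (q y)"
  have K: "K \<in> comps" unfolding K_def using component_of_in_components[OF qV] .
  have "q y \<in> exits K"
    unfolding exits_def K_def using in_component_of[OF qV] q_q[OF yV] y by simp
  moreover have "q y \<in> U" using q_W[OF yV] y by blast
  ultimately have "U_heavy K" by (rule exit_in_U_U_heavy[OF K])
  moreover have "q y \<in> K" using \<open>q y \<in> exits K\<close> exits_subset by blast
  ultimately show ?thesis using K by blast
qed

lemma q_heavy_U: "q ` heavy_U = heavy_W"
proof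
  show "q ` heavy_U \<subseteq> heavy_W"
  proof
    fix y assume "y \<in> q ` heavy_U"
    then obtain v K where v: "K \<in> comps" "U_heavy K" "v \<in> K" "v \<in> U" "y = q v"
      unfolding heavy_U_def by auto
    then have "q v \<in> W" using q_U comp_subset by blast
    moreover have "q v \<in> K" if "q v \<notin> B" using q_stays_in_comp[OF v(1,3) that] .
    ultimately show "y \<in> heavy_W" unfolding heavy_W_def using v(1,2,5) by auto
  qed
  show "heavy_W \<subseteq> q ` heavy_U"
  proof
    fix y assume y: "y \<in> heavy_W"
    have yV: "y \<in> V" using y heavy_W_subset by blast
    have "\<exists>K\<in>comps. U_heavy K \<and> q y \<in> K"
    proof (cases "y \<in> B")
      case True
      then show ?thesis using y q_B_W_in_U_heavy_comp unfolding heavy_W_def by auto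
    next
      case False
      then obtain K where K: "K \<in> comps" "U_heavy K" "y \<in> K" "y \<in> W"
        using y unfolding heavy_W_def by auto
      obtain v where "exits K = {v}" "v \<in> U" using U_heavy_exit[OF K(1,2)] by blast
      have "q y \<notin> B"
      proof
        assume "q y \<in> B"
        then have "y \<in> exits K" using K(3) unfolding exits_def by blast
        then show False using \<open>exits K = {v}\<close> \<open>v \<in> U\<close> K(4) U_W_partition(2) by auto
      qed
      then show ?thesis using K(1,2) q_stays_in_comp[OF K(1,3)] by auto
    qed
    moreover have "q y \<in> U" using q_W[OF yV] y unfolding heavy_W_def by blast
    ultimately have "q y \<in> heavy_U" unfolding heavy_U_def by auto
    then show "y \<in> q ` heavy_U" using q_q[OF yV] by (metis imageI)
  qed
qed

lemma card_heavy_U_W: "card heavy_U = card heavy_W"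
  using card_image[OF inj_on_subset[OF inj_on_q]] heavy_U_subset q_heavy_U by (metis Diff_subset subset_trans)

text \<open>If \<open>u\<close> avoided the \<open>U\<close>-heavy components, every perfect matching of \<open>H\<close> would match their
  \<open>U\<close>-vertices into \<open>heavy_W\<close>, and by counting onto it; but the end of \<open>e*\<close> in \<open>B \<inter> W\<close> lies in
  \<open>heavy_W\<close> and is matched by \<open>e*\<close> into \<open>B\<close>.\<close>

lemma H_matching_heavy_U:
  assumes P: "perfect_matching V (E - {e1, e2}) ends P" and u: "u \<notin> heavy_U"
  shows "mate ends P ` heavy_U \<subseteq> heavy_W"
proof
  have gr: "graph V (E - {e1, e2}) ends" using graph_subset[OF graph_G] by blast
  fix y assume "y \<in> mate ends P ` heavy_U"
  then obtain v K where v: "K \<in> comps" "U_heavy K" "v \<in> K" "v \<in> U" "y = mate ends P v"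
    unfolding heavy_U_def by blast
  have vV: "v \<in> V" using v comp_subset by blast
  obtain f where f: "f \<in> P" "ends f = {v, y}" using mate_spec(1)[OF gr P vV] v(5) by blast
  have fH: "f \<in> E - {e1, e2}" using f(1) P unfolding perfect_matching_def by blast
  then obtain a b where ab: "a \<in> U" "b \<in> W" "ends f = {a, b}" using H_edge by blast
  then have yW: "y \<in> W" using f(2) v(4) U_W_partition(2) by (auto simp: doubleton_eq_iff)
  have "f \<noteq> e"
  proof
    assume "f = e"
    then have "v = u" using f(2) e_ends v(4) w_W U_W_partition(2) by (auto simp: doubleton_eq_iff)
    then show False using u v unfolding heavy_U_def by blast
  qed
  then have "y \<in> K" if "y \<notin> B" using comp_edge_closed[OF v(1,3) _ f(2) that] fH by blast
  then show "y \<in> heavy_W" unfolding heavy_W_def using yW v by blast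
qed

lemma u_in_U_heavy_comp: "\<exists>K\<in>comps. U_heavy K \<and> u \<in> K"
proof (rule ccontr)
  assume "\<not> ?thesis"
  then have u: "u \<notin> heavy_U" unfolding heavy_U_def by blast
  obtain P where P: "perfect_matching V (E - {e1, e2}) ends P" "estar \<in> P"
    using H_matching_covered estar_edge unfolding matching_covered_def admissible_def by blast
  have gr: "graph V (E - {e1, e2}) ends" using graph_subset[OF graph_G] by blast
  have inj: "inj_on (mate ends P) heavy_U"
    using inj_on_subset[OF inj_on_mate[OF gr P(1)]] heavy_U_subset by blast
  have onto: "mate ends P ` heavy_U = heavy_W"
  proof (rule card_subset_eq[OF finite_subset[OF heavy_W_subset finite_V] H_matching_heavy_U[OF P(1) u]])
    show "card (mate ends P ` heavy_U) = card heavy_W" using card_image[OF inj] card_heavy_U_W by simp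
  qed
  obtain x0 y0 where xy: "x0 \<in> U \<inter> B" "y0 \<in> W \<inter> B" "ends estar = {x0, y0}" by (rule estar_ends)
  then obtain v where v: "v \<in> heavy_U" "y0 = mate ends P v" using onto unfolding heavy_W_def by blast
  have "ends estar = {y0, x0}" using xy(3) by (simp add: insert_commute)
  then have "mate ends P y0 = x0" using mate_eqI[OF gr P(1) _ P(2)] xy B_subset by blast
  moreover have "mate ends P y0 = v"
    using v mate_mate[OF gr P(1)] heavy_U_subset by blast
  ultimately show False using v(1) xy(1) heavy_U_subset by blast
qed

lemma comp_U_side_attached:
  assumes K: "K \<in> comps" and e1_K: "\<not> ends e1 \<subseteq> K" and x: "x \<in> K \<inter> U"
    and f: "f \<in> E - {e}" "x \<in> ends f"
  shows "ends f \<inter> (B \<union> K \<inter> W) \<noteq> {}"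
proof -
  obtain y where y: "ends f = {x, y}" using edge_other_end[of ends f x] ends_edge(2) f by blast
  show ?thesis
  proof (cases "y \<in> B")
    case False
    then have yK: "y \<in> K" using comp_edge_closed[OF K _ f(1) y] x by blast
    then have "f \<noteq> e1" using e1_K x y by auto
    moreover have "f \<noteq> e2" using f(2) e2_W x U_W_partition(2) by blast
    ultimately obtain a b where "a \<in> U" "b \<in> W" "ends f = {a, b}" using H_edge f(1) by blast
    then have "y \<in> W" using x y U_W_partition(2) by (auto simp: doubleton_eq_iff)
    then show ?thesis using y yK by blast
  qed (use y in blast)
qed

text \<open>Otherwise \<open>K \<inter> W\<close> could be added to the barrier \<open>B\<close>.\<close>

lemma comp_contains_e1:
  assumes K: "K \<in> comps" and two: "2 \<le> card K"
    and heavy: "U_heavy K \<or> card (K \<inter> U) = card (K \<inter> W)"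
  shows "ends e1 \<subseteq> K"
proof (rule ccontr)
  assume e1_K: "\<not> ends e1 \<subseteq> K"
  have KV: "K \<subseteq> V - B" using comp_subset[OF K] .
  have KY: "K - K \<inter> W = K \<inter> U" using KV U_W_partition by blast
  have "barrier V (E - {e}) ends (B \<union> K \<inter> W)"
  proof (rule barrier_extend[OF graph_subset[OF graph_G] barrier_B K])
    show "\<forall>x\<in>K - K \<inter> W. \<forall>f\<in>E - {e}. x \<in> ends f \<longrightarrow> ends f \<inter> (B \<union> K \<inter> W) \<noteq> {}"
      using comp_U_side_attached[OF K e1_K] KY by blast
    show "card (K \<inter> W) + (if odd (card K) then 1 else 0) \<le> card (K - K \<inter> W)"
      using heavy comp_card_U_W[OF K] unfolding KY one_more_in_def by auto
  qed auto
  then have "B \<union> K \<inter> W = B" using B_maximal B_estar by blast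
  then have "K \<inter> W = {}" using KV by blast
  then have "card (K \<inter> W) = 0" by simp
  then show False using heavy two comp_card_U_W[OF K] unfolding one_more_in_def by auto
qed

lemma U2_incident_edge:
  assumes z: "z \<in> U2" and f: "f \<in> E" "f \<noteq> e1" "z \<in> ends f"
  shows "ends f \<subseteq> insert z (B \<inter> W) \<or> (z = u \<and> ends f = {u, w})"
proof (cases "f = e")
  case True
  then show ?thesis using f(3) e_ends z w_W U_W_partition(2) by auto
next
  case False
  have "f \<noteq> e2" using f(3) e2_W z U_W_partition(2) by blast
  then obtain a b where ab: "a \<in> U" "b \<in> W" "ends f = {a, b}" using H_edge f(1,2) by blast
  then have zb: "ends f = {z, b}" using f(3) z U_W_partition(2) by auto
  have "b \<in> B"
  proof (rule ccontr)
    assume "b \<notin> B"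
    then have "b \<in> {z}" using comp_edge_closed[of "{z}" z f b] z f(1) False zb by blast
    then show False using z ab(2) U_W_partition(2) by blast
  qed
  then show ?thesis using ab(2) zb by blast
qed

lemma U2_U_heavy: "z \<in> U2 \<Longrightarrow> U_heavy {z}"
  using U_W_partition(2) unfolding one_more_in_def by (auto simp: Int_insert_left)

lemma U_heavy_singleton:
  assumes "K \<in> comps" "U_heavy K" "card K = 1" shows "\<exists>z\<in>U2. K = {z}"
proof -
  obtain z where z: "K = {z}" using assms(3) card_1_singletonE by blast
  have "z \<in> U"
  proof (rule ccontr)
    assume "z \<notin> U"
    then have "K \<inter> U = {}" using z by blast
    then show False using assms(2) unfolding one_more_in_def by simp
  qed
  then show ?thesis using z assms(1) by blast
qed

text \<open>If all \<open>U\<close>-heavy components were singletons avoiding \<open>e1\<close>, the vertices of \<open>U2\<close> would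
  have all their neighbours in \<open>(B \<inter> W) \<union> {w}\<close> while \<open>|U2| = |B \<inter> W|\<close>, against the brick
  neighbourhood bound.\<close>

lemma e1_meets_U2:
  assumes singletons: "\<forall>K\<in>comps. U_heavy K \<longrightarrow> card K = 1"
  shows "\<exists>z\<in>U2. z \<in> ends e1"
proof (rule ccontr)
  assume no_z: "\<not> ?thesis"
  have "{K \<in> comps. U_heavy K} = (\<lambda>z. {z}) ` U2"
  proof (intro equalityI subsetI)
    fix K assume "K \<in> {K \<in> comps. U_heavy K}"
    then show "K \<in> (\<lambda>z. {z}) ` U2" using singletons U_heavy_singleton by blast
  next
    fix K assume "K \<in> (\<lambda>z. {z}) ` U2"
    then show "K \<in> {K \<in> comps. U_heavy K}" using U2_U_heavy by auto
  qed
  then have cU2: "card U2 = card (B \<inter> W)"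
    using card_U_heavy_comps card_image[of "\<lambda>z. {z}" U2] by (simp add: inj_on_def)
  obtain y0 where "y0 \<in> W \<inter> B" by (rule estar_ends)
  then have "card (B \<inter> W) \<noteq> 0" using finite_B by auto
  then have U2_ne: "U2 \<noteq> {}" using cU2 by (metis card.empty)
  define N where "N = insert w (B \<inter> W)"
  have "\<forall>f\<in>E. \<forall>z\<in>U2. z \<in> ends f \<longrightarrow> ends f \<subseteq> insert z N"
  proof (intro ballI impI)
    fix f z assume f: "f \<in> E" "z \<in> U2" "z \<in> ends f"
    then have "f \<noteq> e1" using no_z by blast
    then show "ends f \<subseteq> insert z N" using U2_incident_edge f unfolding N_def by blast
  qed
  moreover have "N \<subseteq> V" "U2 \<inter> N = {}"
    using B_subset w_W U_W_partition unfolding N_def by auto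
  ultimately have "card U2 + 2 \<le> card N"
    using brick_neighbourhood_bound[OF brick U2_subset U2_ne] by blast
  moreover have "card N \<le> card (B \<inter> W) + 1"
    unfolding N_def using finite_B by (simp add: card_insert_if)
  ultimately show False using cU2 by linarith
qed

lemma comp_e1_U_heavy:
  assumes K: "K \<in> comps" "ends e1 \<subseteq> K" shows "U_heavy K"
proof (rule ccontr)
  assume not_heavy: "\<not> U_heavy K"
  have "card L = 1" if L: "L \<in> comps" "U_heavy L" for L
  proof (rule ccontr)
    assume "card L \<noteq> 1"
    moreover have "card L \<noteq> 0" using finite_comp[OF L(1)] component_nonempty[OF L(1)] by simp
    ultimately have "ends e1 \<subseteq> L" using comp_contains_e1[OF L(1)] L(2) by simp
    then have "L = K"
      using components_disjoint[OF L(1) K(1)] K(2) e1_card by (metis card.empty subset_iff zero_neq_numeral ex_in_conv)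
    then show False using not_heavy L(2) by blast
  qed
  then obtain z where z: "z \<in> U2" "z \<in> ends e1" using e1_meets_U2 by blast
  then have "K = {z}" using components_disjoint[OF K(1), of "{z}" z] K(2) by blast
  then show False using K(2) e1_card card_mono[of "{z}" "ends e1"] by simp
qed

abbreviation "has_K1 \<equiv> \<exists>K\<in>comps. ends e1 \<subseteq> K"
definition K1 :: "'v set" where
  "K1 = (THE K. K \<in> comps \<and> ends e1 \<subseteq> K)"

lemma K1_unique:
  assumes "K \<in> comps" "ends e1 \<subseteq> K" "K' \<in> comps" "ends e1 \<subseteq> K'" shows "K = K'"
proof -
  obtain x where "x \<in> ends e1" using e1_card by fastforce
  then show ?thesis using components_disjoint[OF assms(1,3)] assms(2,4) by blast
qed

lemma K1:
  assumes has_K1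
  shows "K1 \<in> comps" "ends e1 \<subseteq> K1" "U_heavy K1" "2 \<le> card K1"
proof -
  obtain K where K: "K \<in> comps" "ends e1 \<subseteq> K" using assms by blast
  have "K1 = K" unfolding K1_def
  proof (rule the_equality)
    show "K \<in> comps \<and> ends e1 \<subseteq> K" using K by blast
    show "K' = K" if "K' \<in> comps \<and> ends e1 \<subseteq> K'" for K' using that K K1_unique by blast
  qed
  then show K1: "K1 \<in> comps" "ends e1 \<subseteq> K1" using K by simp_all
  then show "U_heavy K1" by (rule comp_e1_U_heavy)
  show "2 \<le> card K1" using card_mono[OF finite_comp[OF K1(1)] K1(2)] e1_card by simp
qed

lemma K1_eqI: "K \<in> comps \<Longrightarrow> ends e1 \<subseteq> K \<Longrightarrow> K = K1"
  using K1_unique K1(1,2) by blast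

lemma U_heavy_cases:
  assumes K: "K \<in> comps" "U_heavy K" shows "(\<exists>z\<in>U2. K = {z}) \<or> (has_K1 \<and> K = K1)"
proof (cases "2 \<le> card K")
  case True
  then have "ends e1 \<subseteq> K" using comp_contains_e1[OF K(1)] K(2) by blast
  then show ?thesis using K1_eqI K(1) by blast
next
  case False
  moreover have "card K \<noteq> 0" using finite_comp[OF K(1)] component_nonempty[OF K(1)] by simp
  ultimately show ?thesis using U_heavy_singleton[OF K] by simp
qed

lemma K1_U2_disjoint:
  assumes has_K1 shows "K1 \<inter> U2 = {}"
proof (rule ccontr)
  assume "K1 \<inter> U2 \<noteq> {}"
  then obtain z where "z \<in> K1" "{z} \<in> comps" by blast
  then have "K1 = {z}" using components_disjoint[OF K1(1)[OF assms]] by blast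
  then show False using K1(4)[OF assms] by simp
qed

lemma card_B_W: "card (B \<inter> W) = card U2 + (if has_K1 then 1 else 0)"
proof -
  have "{K \<in> comps. U_heavy K} = (\<lambda>z. {z}) ` U2 \<union> (if has_K1 then {K1} else {})"
  proof (intro equalityI subsetI)
    fix K assume "K \<in> {K \<in> comps. U_heavy K}"
    then have "(\<exists>z\<in>U2. K = {z}) \<or> (has_K1 \<and> K = K1)" using U_heavy_cases by blast
    then show "K \<in> (\<lambda>z. {z}) ` U2 \<union> (if has_K1 then {K1} else {})" by auto
  next
    fix K assume "K \<in> (\<lambda>z. {z}) ` U2 \<union> (if has_K1 then {K1} else {})"
    then show "K \<in> {K \<in> comps. U_heavy K}"
      using U2_U_heavy K1(1,3) by (auto split: if_splits)
  qed
  moreover have "card {K \<in> comps. U_heavy K} = card (B \<inter> W)" by (rule card_U_heavy_comps)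
  moreover have "card ((\<lambda>z. {z}) ` U2) = card U2" by (simp add: card_image)
  moreover have "finite ((\<lambda>z. {z}) ` U2)" using finite_subset[OF U2_subset finite_V] by simp
  moreover have "K1 \<notin> (\<lambda>z. {z}) ` U2" if has_K1 using K1(4)[OF that] by auto
  ultimately show ?thesis by (cases has_K1) simp_all
qed

lemma no_K1_e1_meets_U2:
  assumes "\<not> has_K1" shows "\<exists>z\<in>U2. z \<in> ends e1"
proof (rule e1_meets_U2, intro ballI impI)
  fix K assume "K \<in> comps" "U_heavy K"
  then obtain z where "K = {z}" using U_heavy_cases assms by blast
  then show "card K = 1" by simp
qed

lemma U2_empty_if_u_in_K1:
  assumes has: has_K1 and u: "u \<in> K1" shows "U2 = {}"
proof (rule ccontr)
  assume U2_ne: "U2 \<noteq> {}"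
  have "\<forall>f\<in>E. \<forall>z\<in>U2. z \<in> ends f \<longrightarrow> ends f \<subseteq> insert z (B \<inter> W)"
  proof (intro ballI impI)
    fix f z assume f: "f \<in> E" "z \<in> U2" "z \<in> ends f"
    then have "z \<notin> K1" using K1_U2_disjoint[OF has] by blast
    then have "f \<noteq> e1" "z \<noteq> u" using f(3) K1(2)[OF has] u by blast+
    then show "ends f \<subseteq> insert z (B \<inter> W)" using U2_incident_edge f by blast
  qed
  moreover have "B \<inter> W \<subseteq> V" "U2 \<inter> (B \<inter> W) = {}" using B_subset U_W_partition(2) by auto
  ultimately have "card U2 + 2 \<le> card (B \<inter> W)"
    using brick_neighbourhood_bound[OF brick U2_subset U2_ne] by blast
  then show False using card_B_W has by simp
qed

lemma u_location:
  "(U2 \<noteq> {} \<longrightarrow> u \<in> U2) \<and> (U2 = {} \<longrightarrow> has_K1 \<and> u \<in> K1 \<and> card (B \<inter> W) = 1)"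
proof -
  obtain K where K: "K \<in> comps" "U_heavy K" "u \<in> K" using u_in_U_heavy_comp by blast
  show ?thesis
  proof (cases "\<exists>z\<in>U2. K = {z}")
    case True
    then show ?thesis using K(3) by auto
  next
    case False
    then have has: has_K1 and "u \<in> K1" using U_heavy_cases[OF K(1,2)] K(3) by auto
    moreover have "U2 = {}" by (rule U2_empty_if_u_in_K1[OF has \<open>u \<in> K1\<close>])
    moreover have "card U2 = 0" by (simp only: \<open>U2 = {}\<close> card.empty)
    ultimately show ?thesis using card_B_W by simp
  qed
qed

lemma edges_in_K1_U: "has_K1 \<Longrightarrow> edges_in E ends (K1 \<inter> U) = {e1}"
proof (intro equalityI subsetI)
  fix f assume "f \<in> edges_in E ends (K1 \<inter> U)"
  then have f: "f \<in> E" "ends f \<subseteq> U" unfolding edges_in_def by auto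
  have "f \<noteq> e2"
  proof
    assume "f = e2"
    then have "ends e2 = {}" using f(2) e2_W U_W_partition(2) by blast
    then show False using ends_edge(2)[OF e2_edge] by simp
  qed
  then have "f = e1" using H_edge f U_W_partition(2) by blast
  then show "f \<in> {e1}" by simp
next
  fix f assume "has_K1" "f \<in> {e1}"
  then show "f \<in> edges_in E ends (K1 \<inter> U)" unfolding edges_in_def using e1_edge K1(2) e1_U by blast
qed

lemma edges_between_B_U2: "\<not> has_K1 \<Longrightarrow> edges_between E ends (B \<inter> U) U2 = {e1}"
proof (intro equalityI subsetI)
  fix f assume "f \<in> edges_between E ends (B \<inter> U) U2"
  then obtain x y where f: "f \<in> E" "x \<in> U" "y \<in> U" "ends f = {x, y}" unfolding edges_between_def by blast
  have "f \<noteq> e2" using f e2_W U_W_partition(2) by blast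
  have "f = e1"
  proof (rule ccontr)
    assume "f \<noteq> e1"
    then obtain a b where "b \<in> W" "ends f = {a, b}" using H_edge f(1) \<open>f \<noteq> e2\<close> by blast
    then show False using f(2-4) U_W_partition(2) by (auto simp: doubleton_eq_iff)
  qed
  then show "f \<in> {e1}" by simp
next
  fix f assume nex: "\<not> has_K1" and "f \<in> {e1}"
  then have f: "f = e1" by simp
  obtain z where z: "z \<in> U2" "z \<in> ends e1" using no_K1_e1_meets_U2[OF nex] by blast
  obtain z' where z': "z' \<noteq> z" "ends e1 = {z, z'}" using edge_other_end[of ends e1 z] e1_card z(2) by blast
  have "z' \<in> B"
  proof (rule ccontr)
    assume "z' \<notin> B"
    then have "z' \<in> {z}" using comp_edge_closed[of "{z}" z e1 z'] z(1) e1_edge e_edge z'(2) by blast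
    then show False using z'(1) by blast
  qed
  then have "ends e1 = {z', z}" "z' \<in> B \<inter> U" using z'(2) e1_U by (auto simp: insert_commute)
  then show "f \<in> edges_between E ends (B \<inter> U) U2" unfolding edges_between_def f using e1_edge z(1) by blast
qed

abbreviation "has_K2 \<equiv> \<exists>K\<in>comps. ends e2 \<subseteq> K"
abbreviation "K2 \<equiv> type_II_decomposition.K1 V E ends e2 e B"

lemmas K2 = type_II_decomposition.K1[OF swap]
lemmas K2_eqI = type_II_decomposition.K1_eqI[OF swap]
lemmas card_B_U = type_II_decomposition.card_B_W[OF swap]

lemma K1_neq_K2: "has_K1 \<Longrightarrow> has_K2 \<Longrightarrow> K1 \<noteq> K2"
  using K1(3) K2(3) unfolding one_more_in_def by force

lemma nontrivial_comp_cases: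
  assumes K: "K \<in> comps" "2 \<le> card K" shows "(has_K1 \<and> K = K1) \<or> (has_K2 \<and> K = K2)"
proof -
  have "ends e1 \<subseteq> K \<or> ends e2 \<subseteq> K"
    using comp_heaviness[OF K(1)] comp_contains_e1[OF K] type_II_decomposition.comp_contains_e1[OF swap K]
    by auto
  then show ?thesis using K1_eqI K2_eqI K(1) by blast
qed

abbreviation "VG1 \<equiv> if has_K2 then K2 else {}"
abbreviation "VG2 \<equiv> if has_K1 then K1 else {}"

lemma td_singles_U: "td_singles V E ends e B U = U2"
  and td_singles_W: "td_singles V E ends e B W = W1"
  unfolding td_singles_def td_comps_def by simp_all

lemma td_NT_eq: "td_NT V E ends e B = (if has_K1 then {K1} else {}) \<union> (if has_K2 then {K2} else {})"
  unfolding td_NT_def td_comps_def using nontrivial_comp_cases K1(1,4) K2(1,4) by auto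

lemma the_comp_containing:
  assumes "NT \<subseteq> comps" "K \<in> NT" "ends f \<subseteq> K" "f \<in> E"
  shows "(THE C. C \<in> NT \<and> ends f \<subseteq> C) = K"
proof (rule the_equality)
  fix C assume C: "C \<in> NT \<and> ends f \<subseteq> C"
  obtain x where "x \<in> ends f" using ends_edge(2)[OF assms(4)] by fastforce
  then show "C = K" using components_disjoint[of C _ _ _ K x] C assms(1-3) by blast
qed (use assms in blast)

lemma td_VG: "td_VG1 V E ends e e1 e2 U W B = VG1" "td_VG2 V E ends e e1 e2 U W B = VG2"
proof -
  note defs = td_VG1_def td_VG2_def Let_def td_NT_eq td_singles_W
  have "td_VG1 V E ends e e1 e2 U W B = VG1 \<and> td_VG2 V E ends e e1 e2 U W B = VG2"
  proof (cases has_K1; cases has_K2)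
    assume has: has_K1 has_K2
    have NT: "td_NT V E ends e B \<subseteq> comps" "K1 \<in> td_NT V E ends e B" "K2 \<in> td_NT V E ends e B"
      using has td_NT_eq unfolding td_NT_def td_comps_def by auto
    have "(THE C. C \<in> td_NT V E ends e B \<and> ends e1 \<subseteq> C) = K1"
      "(THE C. C \<in> td_NT V E ends e B \<and> ends e2 \<subseteq> C) = K2"
      using the_comp_containing[OF NT(1)] NT(2,3) K1(2) K2(2) has e1_edge e2_edge by blast+
    then show ?thesis using has K1_neq_K2 unfolding defs by simp
  next
    assume "has_K1" "\<not> has_K2"
    then show ?thesis using card_B_U unfolding defs by simp
  next
    assume "\<not> has_K1" "has_K2"
    then show ?thesis using card_B_U unfolding defs by simp
  next
    assume "\<not> has_K1" "\<not> has_K2"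
    then show ?thesis unfolding defs by simp
  qed
  then show "td_VG1 V E ends e e1 e2 U W B = VG1" "td_VG2 V E ends e e1 e2 U W B = VG2" by blast+
qed

lemma u_property: "if U2 \<noteq> {} then u \<in> U2 else u \<in> VG2 \<inter> U \<and> card (B \<inter> W) = 1"
  using u_location u_U by auto

lemma w_property: "if W1 \<noteq> {} then w \<in> W1 else w \<in> VG1 \<inter> W"
  using type_II_decomposition.u_location[OF swap] w_W by auto

lemma e1_property:
  "if VG2 \<inter> U \<noteq> {} then edges_in E ends (VG2 \<inter> U) = {e1}
   else edges_between E ends (B \<inter> U) U2 = {e1}"
proof (cases has_K1)
  case True
  moreover have "ends e1 \<noteq> {}" using e1_card by auto
  then have "K1 \<inter> U \<noteq> {}" using K1(2)[OF True] e1_U by blast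
  ultimately show ?thesis using edges_in_K1_U by simp
qed (simp add: edges_between_B_U2)

lemma e2_property:
  "if VG1 \<inter> W \<noteq> {} then card (B \<inter> U) = card W1 + 1 \<and> edges_in E ends (VG1 \<inter> W) = {e2}
   else card (B \<inter> U) = card W1 \<and> edges_between E ends W1 (B \<inter> W) = {e2} \<and> VG1 \<inter> U = {}"
proof (cases has_K2)
  case True
  moreover have "ends e2 \<noteq> {}" using ends_edge(2)[OF e2_edge] by auto
  then have "K2 \<inter> W \<noteq> {}" using K2(2)[OF True] e2_W by blast
  ultimately show ?thesis
    using type_II_decomposition.edges_in_K1_U[OF swap] card_B_U by simp
next
  case False
  have "edges_between E ends W1 (B \<inter> W) = edges_between E ends (B \<inter> W) W1"
    unfolding edges_between_def by (auto simp: insert_commute)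
  then show ?thesis using type_II_decomposition.edges_between_B_U2[OF swap False] card_B_U False by simp
qed

lemma card_property: "card (U2 \<union> VG2 \<inter> U) = card (B \<inter> W \<union> VG2 \<inter> W)"
proof (cases has_K1)
  case True
  have "finite K1" using finite_comp[OF K1(1)[OF True]] .
  moreover have "U2 \<inter> (K1 \<inter> U) = {}" "B \<inter> W \<inter> (K1 \<inter> W) = {}"
    using K1_U2_disjoint[OF True] comp_subset[OF K1(1)[OF True]] by auto
  moreover have "finite U2" using finite_subset[OF U2_subset finite_V] .
  ultimately show ?thesis
    using True K1(3)[OF True] card_B_W finite_B
    by (simp add: card_Un_disjoint one_more_in_def)
qed (simp add: card_B_W)

end

text \<open>The nonremovability of \<open>e\<close> and the nonadmissibility of \<open>e*\<close> only serve to produce \<open>e*\<close>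
  and \<open>B\<close>.\<close>

theorem mainTheorem11:
  fixes V :: "'v set" and E :: "'e set" and ends :: "'e \<Rightarrow> 'v set"
    and e1 e2 e estar :: 'e and U W B :: "'v set" and u w :: 'v
  assumes brick: "brick V E ends"
    and doubleton: "removable_doubleton V E ends e1 e2"
    and bip_UW: "U \<union> W = V" "U \<inter> W = {}"
      "\<forall>f\<in>E - {e1, e2}. \<exists>x\<in>U. \<exists>y\<in>W. ends f = {x, y}"
    and e1_U: "ends e1 \<subseteq> U" and e2_W: "ends e2 \<subseteq> W"
    and e_edge: "e \<in> E" "e \<notin> {e1, e2}"
    and e_nonrem_G: "\<not> removable V E ends e"
    and e_nonrem_H: "\<not> removable V (E - {e1, e2}) ends e"
    and e_ends: "ends e = {u, w}" and u_U: "u \<in> U" and w_W: "w \<in> W"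
    and estar_edge: "estar \<in> E - {e, e1, e2}"
    and estar_nonadm_Ge: "\<not> admissible V (E - {e}) ends estar"
    and estar_nonadm_He: "\<not> admissible V (E - {e, e1, e2}) ends estar"
    and B_barrier: "barrier V (E - {e}) ends B" and B_estar: "ends estar \<subseteq> B"
    and B_max: "\<forall>B'. barrier V (E - {e}) ends B' \<and> ends estar \<subseteq> B' \<and> B \<subseteq> B' \<longrightarrow> B' = B"
  defines "U1 \<equiv> B \<inter> U" and "W2 \<equiv> B \<inter> W"
    and "U2 \<equiv> td_singles V E ends e B U" and "W1 \<equiv> td_singles V E ends e B W"
    and "U3 \<equiv> td_VG1 V E ends e e1 e2 U W B \<inter> U" and "W3 \<equiv> td_VG1 V E ends e e1 e2 U W B \<inter> W"
    and "U4 \<equiv> td_VG2 V E ends e e1 e2 U W B \<inter> U" and "W4 \<equiv> td_VG2 V E ends e e1 e2 U W B \<inter> W"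
  shows "(if U2 \<noteq> {} then u \<in> U2 else u \<in> U4 \<and> card W2 = 1)
    \<and> (if W1 \<noteq> {} then w \<in> W1 else w \<in> W3)
    \<and> (if U4 \<noteq> {} then edges_in E ends U4 = {e1} else edges_between E ends U1 U2 = {e1})
    \<and> (if W3 \<noteq> {} then card U1 = card W1 + 1 \<and> edges_in E ends W3 = {e2}
       else card U1 = card W1 \<and> edges_between E ends W1 W2 = {e2} \<and> U3 = {})
    \<and> card (U2 \<union> U4) = card (W2 \<union> W4)"
proof -
  have H: "matching_covered V (E - {e1, e2}) ends" "e1 \<in> E" "e2 \<in> E"
    using doubleton unfolding removable_doubleton_def by auto
  interpret type_II_decomposition V E ends e1 e2 e estar U W B u w
    by unfold_locales
      (fact brick H bip_UW e1_U e2_W e_edge e_ends u_U w_W estar_edge B_barrier B_estar B_max)+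
  show ?thesis
    unfolding U1_def W2_def U2_def W1_def U3_def W3_def U4_def W4_def td_singles_U td_singles_W td_VG
    using u_property w_property e1_property e2_property card_property by blast
qed

end
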